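(* Let $G$ be a finite group and $\mathsf{T}$ a $G$-transfer system. Let $S$ and $R$ be two minimal generating sets for $\mathsf{T}$. Then there exists a bijection $f\colon S\to R$ such that for every $n\in\mathbb{N}$, $f$ sends each element of $S_n\setminus S_{n+1}$ to an element of $R_n\setminus R_{n+1}$.
   Context: For a finite group $G$, an arrow is a pair $(H,K)$ of subgroups with $H\leqslant K$; it is an identity arrow if $H=K$. A $G$-transfer system is a set $\mathsf{T}$ of arrows containing all identity arrows and closed under composition ($(H,K),(K,L)\in\mathsf{T}\Rightarrow(H,L)\in\mathsf{T}$), conjugation ($(H,K)\in\mathsf{T}\Rightarrow(gHg^{-1},gKg^{-1})\in\mathsf{T}$ for all $g\in G$) and restriction ($(H,K)\in\mathsf{T}$, $L\leqslant K\Rightarrow(H\cap L,L)\in\mathsf{T}$). For a set $S$ of non-identity arrows, $\langle S\rangle$ is the smallest transfer system containing $S$. A minimal generating set of $\mathsf{T}$ is a set $S\subseteq\mathsf{T}$ of non-identity arrows with $\langle S\rangle=\mathsf{T}$ and $\langle S\setminus\{s\}\rangle\subsetneq\mathsf{T}$ for all $s\in S$. For a subgroup $H$, let $P(H)$ be the sum of the exponents in the prime factorization of $|H|$ (i.e. the number of prime factors of $|H|$ counted with multiplicity). For a set $S$ of non-identity arrows and $N\in\mathbb{N}$, put $S_N=\{(K,H)\in S : P(K)\geqslant N\}$, where $(K,H)$ denotes an arrow with $K\leqslant H$. *)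

theory Defs
  imports "HOL-Algebra.Algebra" "HOL-Computational_Algebra.Primes"
begin

definition is_arrow :: "('a, 'b) monoid_scheme \<Rightarrow> 'a set \<times> 'a set \<Rightarrow> bool" where
  "is_arrow G a \<longleftrightarrow> subgroup (fst a) G \<and> subgroup (snd a) G \<and> fst a \<subseteq> snd a"

definition conj_sub :: "('a, 'b) monoid_scheme \<Rightarrow> 'a \<Rightarrow> 'a set \<Rightarrow> 'a set" where
  "conj_sub G g H = (\<lambda>h. g \<otimes>\<^bsub>G\<^esub> h \<otimes>\<^bsub>G\<^esub> inv\<^bsub>G\<^esub> g) ` H"

definition transfer_system :: "('a, 'b) monoid_scheme \<Rightarrow> ('a set \<times> 'a set) set \<Rightarrow> bool" where
  "transfer_system G T \<longleftrightarrow>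
     (\<forall>a\<in>T. is_arrow G a) \<and>
     (\<forall>H. subgroup H G \<longrightarrow> (H, H) \<in> T) \<and>
     (\<forall>H K L. (H, K) \<in> T \<longrightarrow> (K, L) \<in> T \<longrightarrow> (H, L) \<in> T) \<and>
     (\<forall>H K g. (H, K) \<in> T \<longrightarrow> g \<in> carrier G \<longrightarrow> (conj_sub G g H, conj_sub G g K) \<in> T) \<and>
     (\<forall>H K L. (H, K) \<in> T \<longrightarrow> subgroup L G \<longrightarrow> L \<subseteq> K \<longrightarrow> (H \<inter> L, L) \<in> T)"

definition generated_ts :: "('a, 'b) monoid_scheme \<Rightarrow> ('a set \<times> 'a set) set \<Rightarrow> ('a set \<times> 'a set) set" where
  "generated_ts G S = \<Inter> {T. transfer_system G T \<and> S \<subseteq> T}"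

definition minimal_generating_set ::
  "('a, 'b) monoid_scheme \<Rightarrow> ('a set \<times> 'a set) set \<Rightarrow> ('a set \<times> 'a set) set \<Rightarrow> bool" where
  "minimal_generating_set G T S \<longleftrightarrow>
     S \<subseteq> T \<and> (\<forall>a\<in>S. fst a \<noteq> snd a) \<and>
     generated_ts G S = T \<and> (\<forall>s\<in>S. generated_ts G (S - {s}) \<subset> T)"

definition P_len :: "'a set \<Rightarrow> nat" where
  "P_len H = size (prime_factorization (card H))"

definition S_ge :: "('a set \<times> 'a set) set \<Rightarrow> nat \<Rightarrow> ('a set \<times> 'a set) set" where
  "S_ge S N = {a \<in> S. N \<le> P_len (fst a)}"

end

theory Submission
  imports Defs
begin

text \<open>
  Write level (H, K) = P(H) and, for a set W of arrows, W_{>n} for its arrows of level > n.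
  If W lies in a transfer system, then every arrow a of <W> of level n already lies in
  <W_{>n} \<union> Z> for some Z \<subseteq> W of at most one arrow, of level n: such arrows form a
  transfer system containing W, because composition, conjugation and restriction either keep
  the level of the source or strictly lower it, and in the latter case Z becomes superfluous.
  For a minimal generating set S this gives <S_{>n}> = <R_{>n}> for every other generating set R,
  and distinct arrows s, s' of S of level n give distinct systems <S_{>n} \<union> {s}>, since
  otherwise s' would be redundant; moreover every s \<in> S has a partner r \<in> R of the same level
  with <S_{>n} \<union> {r}> = <S_{>n} \<union> {s}>. So s \<mapsto> (level s, <S_{>level s} \<union> {s}>) is injective on
  S and on R with the same image, which yields a level-preserving bijection S \<rightarrow> R.
\<close>

context
  fixes G :: "('a, 'b) monoid_scheme"
begin

lemma transfer_systemI:
  assumes "\<And>a. a \<in> T \<Longrightarrow> is_arrow G a"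
    and "\<And>H. subgroup H G \<Longrightarrow> (H, H) \<in> T"
    and "\<And>H K L. (H, K) \<in> T \<Longrightarrow> (K, L) \<in> T \<Longrightarrow> (H, L) \<in> T"
    and "\<And>H K g. (H, K) \<in> T \<Longrightarrow> g \<in> carrier G \<Longrightarrow> (conj_sub G g H, conj_sub G g K) \<in> T"
    and "\<And>H K L. (H, K) \<in> T \<Longrightarrow> subgroup L G \<Longrightarrow> L \<subseteq> K \<Longrightarrow> (H \<inter> L, L) \<in> T"
  shows "transfer_system G T"
  using assms unfolding transfer_system_def by blast

lemma transfer_systemD:
  assumes "transfer_system G T"
  shows transfer_system_is_arrow: "\<And>a. a \<in> T \<Longrightarrow> is_arrow G a"
    and transfer_system_refl: "\<And>H. subgroup H G \<Longrightarrow> (H, H) \<in> T"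
    and transfer_system_trans: "\<And>H K L. (H, K) \<in> T \<Longrightarrow> (K, L) \<in> T \<Longrightarrow> (H, L) \<in> T"
    and transfer_system_conj:
      "\<And>H K g. (H, K) \<in> T \<Longrightarrow> g \<in> carrier G \<Longrightarrow> (conj_sub G g H, conj_sub G g K) \<in> T"
    and transfer_system_restrict:
      "\<And>H K L. (H, K) \<in> T \<Longrightarrow> subgroup L G \<Longrightarrow> L \<subseteq> K \<Longrightarrow> (H \<inter> L, L) \<in> T"
  using assms unfolding transfer_system_def by (elim conjE; blast)+

lemma transfer_system_Inter:
  assumes "F \<noteq> {}" and ts: "\<And>T. T \<in> F \<Longrightarrow> transfer_system G T"
  shows "transfer_system G (\<Inter>F)"
proof (rule transfer_systemI)
  fix a assume "a \<in> \<Inter>F"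
  with assms show "is_arrow G a" by (auto intro: transfer_system_is_arrow)
next
  fix H assume "subgroup H G"
  then show "(H, H) \<in> \<Inter>F" by (simp add: ts transfer_system_refl)
next
  fix H K L assume HK: "(H, K) \<in> \<Inter>F" and KL: "(K, L) \<in> \<Inter>F"
  show "(H, L) \<in> \<Inter>F"
  proof
    fix T assume "T \<in> F"
    with HK KL show "(H, L) \<in> T" by (blast intro: transfer_system_trans[OF ts[OF \<open>T \<in> F\<close>]])
  qed
next
  fix H K g assume "(H, K) \<in> \<Inter>F" and "g \<in> carrier G"
  then show "(conj_sub G g H, conj_sub G g K) \<in> \<Inter>F" by (simp add: ts transfer_system_conj)
next
  fix H K L assume HK: "(H, K) \<in> \<Inter>F" and L: "subgroup L G" "L \<subseteq> K"
  show "(H \<inter> L, L) \<in> \<Inter>F"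
  proof
    fix T assume "T \<in> F"
    with HK L show "(H \<inter> L, L) \<in> T" by (blast intro: transfer_system_restrict[OF ts[OF \<open>T \<in> F\<close>]])
  qed
qed

lemma transfer_system_generated_ts:
  assumes "transfer_system G T" and "A \<subseteq> T"
  shows "transfer_system G (generated_ts G A)"
  unfolding generated_ts_def using assms by (intro transfer_system_Inter) auto

lemma generated_ts_least: "transfer_system G T \<Longrightarrow> A \<subseteq> T \<Longrightarrow> generated_ts G A \<subseteq> T"
  unfolding generated_ts_def by auto

lemma subset_generated_ts: "A \<subseteq> generated_ts G A"
  unfolding generated_ts_def by auto

lemma generated_ts_mono: "A \<subseteq> B \<Longrightarrow> generated_ts G A \<subseteq> generated_ts G B"
  unfolding generated_ts_def by auto

lemma generated_ts_subsetI: "A \<subseteq> generated_ts G B \<Longrightarrow> generated_ts G A \<subseteq> generated_ts G B"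
  unfolding generated_ts_def by blast

lemma generated_ts_eqI:
  "A \<subseteq> generated_ts G B \<Longrightarrow> B \<subseteq> generated_ts G A \<Longrightarrow> generated_ts G A = generated_ts G B"
  by (intro subset_antisym generated_ts_subsetI)

lemma generated_ts_Un_mono:
  assumes "A \<subseteq> generated_ts G A'"
  shows "generated_ts G (A \<union> B) \<subseteq> generated_ts G (A' \<union> B)"
proof (rule generated_ts_subsetI)
  have "generated_ts G A' \<subseteq> generated_ts G (A' \<union> B)"
    by (simp add: generated_ts_mono)
  with assms show "A \<union> B \<subseteq> generated_ts G (A' \<union> B)"
    using subset_generated_ts[of "A' \<union> B"] by blast
qed

lemma generated_ts_Un_cong:
  "generated_ts G A = generated_ts G A' \<Longrightarrow> generated_ts G (A \<union> B) = generated_ts G (A' \<union> B)"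
  by (metis generated_ts_Un_mono subset_antisym subset_generated_ts)

end

lemma size_prime_factorization_mono:
  fixes m n :: nat
  assumes "m dvd n" and "n \<noteq> 0"
  shows "size (prime_factorization m) \<le> size (prime_factorization n)"
  using assms by (intro size_mset_mono) (auto simp: prime_factorization_subset_iff_dvd)

lemma dvd_eq_if_size_prime_factorization_eq:
  fixes m n :: nat
  assumes "m dvd n" and "n \<noteq> 0"
    and "size (prime_factorization m) = size (prime_factorization n)"
  shows "m = n"
proof -
  obtain c where n: "n = m * c" using assms(1) ..
  with assms have "m \<noteq> 0" "c \<noteq> 0" by auto
  with n assms(3) have "prime_factorization c = {#}"
    by (simp add: prime_factorization_mult)
  with \<open>c \<noteq> 0\<close> have "c = 1" by (simp add: prime_factorization_empty_iff)
  with n show ?thesis by simp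
qed

context group
begin

lemma card_subgroup_dvd:
  assumes "subgroup I G" and "subgroup J G" and "I \<subseteq> J"
  shows "card I dvd card J"
proof -
  have "card (rcosets\<^bsub>G\<lparr>carrier := J\<rparr>\<^esub> I) * card I = order (G\<lparr>carrier := J\<rparr>)"
    using assms by (intro group.lagrange subgroup_imp_group subgroup_incl)
  then have "card J = card (rcosets\<^bsub>G\<lparr>carrier := J\<rparr>\<^esub> I) * card I"
    by (simp add: order_def)
  then show ?thesis by simp
qed

lemma P_len_conj_sub:
  assumes "H \<subseteq> carrier G" and "g \<in> carrier G"
  shows "P_len (conj_sub G g H) = P_len H"
proof -
  have "inj_on (\<lambda>h. g \<otimes> h \<otimes> inv g) H"
  proof (rule inj_onI)
    fix x y assume "x \<in> H" "y \<in> H" "g \<otimes> x \<otimes> inv g = g \<otimes> y \<otimes> inv g"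
    with assms have "g \<otimes> x = g \<otimes> y" by (simp add: subsetD)
    with assms \<open>x \<in> H\<close> \<open>y \<in> H\<close> show "x = y" by (simp add: subsetD)
  qed
  then show ?thesis unfolding P_len_def conj_sub_def by (simp add: card_image)
qed

context
  assumes finite_carrier: "finite (carrier G)"
begin

lemma finite_subgroup: "subgroup H G \<Longrightarrow> finite H"
  using finite_carrier finite_subset subgroup.subset by blast

lemma card_subgroup_ne_zero: "subgroup H G \<Longrightarrow> card H \<noteq> 0"
  using finite_subgroup subgroup.one_closed card_0_eq by blast

lemma P_len_subgroup_mono:
  "subgroup I G \<Longrightarrow> subgroup J G \<Longrightarrow> I \<subseteq> J \<Longrightarrow> P_len I \<le> P_len J"
  unfolding P_len_def
  by (intro size_prime_factorization_mono card_subgroup_dvd card_subgroup_ne_zero)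

lemma subgroup_eq_if_P_len_eq:
  assumes "subgroup I G" and "subgroup J G" and "I \<subseteq> J" and "P_len I = P_len J"
  shows "I = J"
proof -
  have "card I = card J"
    using assms unfolding P_len_def
    by (intro dvd_eq_if_size_prime_factorization_eq[OF card_subgroup_dvd card_subgroup_ne_zero])
  with assms(2,3) finite_subgroup show ?thesis by (simp add: card_subset_eq)
qed

end

end

definition level :: "'a set \<times> 'a set \<Rightarrow> nat" where
  "level a = P_len (fst a)"

lemma level_pair [simp]: "level (H, K) = P_len H"
  by (simp add: level_def)

lemma mem_S_ge_iff: "a \<in> S_ge W n \<longleftrightarrow> a \<in> W \<and> n \<le> level a"
  by (simp add: S_ge_def level_def)

lemma S_ge_subset: "S_ge W n \<subseteq> W"
  by (auto simp: mem_S_ge_iff)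

lemma S_ge_diff_S_ge_Suc: "S_ge W n - S_ge W (n + 1) = {a \<in> W. level a = n}"
  by (auto simp: mem_S_ge_iff)

definition generated_by_higher_and_one ::
  "('a, 'b) monoid_scheme \<Rightarrow> ('a set \<times> 'a set) set \<Rightarrow> nat \<Rightarrow> 'a set \<times> 'a set \<Rightarrow> bool" where
  "generated_by_higher_and_one G W n a \<longleftrightarrow>
     (\<exists>Z w. Z \<subseteq> {v \<in> W. level v = n} \<and> Z \<subseteq> {w} \<and> a \<in> generated_ts G (S_ge W (Suc n) \<union> Z))"

context
  fixes G :: "('a, 'b) monoid_scheme"
begin

lemma generated_by_higher_and_oneI:
  "Z \<subseteq> {v \<in> W. level v = n} \<Longrightarrow> Z \<subseteq> {w} \<Longrightarrow> a \<in> generated_ts G (S_ge W (Suc n) \<union> Z) \<Longrightarrow>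
    generated_by_higher_and_one G W n a"
  unfolding generated_by_higher_and_one_def by blast

lemma generated_by_higher_and_oneE:
  assumes "generated_by_higher_and_one G W n a"
  obtains Z w where "Z \<subseteq> {v \<in> W. level v = n}" and "Z \<subseteq> {w}"
    and "a \<in> generated_ts G (S_ge W (Suc n) \<union> Z)"
  using assms unfolding generated_by_higher_and_one_def by blast

lemma generated_by_higher_and_one_if_higher:
  "a \<in> generated_ts G (S_ge W (Suc n)) \<Longrightarrow> generated_by_higher_and_one G W n a"
  by (rule generated_by_higher_and_oneI[of "{}"]) auto

lemma generated_ts_lower_level:
  assumes "m < n" and "Z \<subseteq> {v \<in> W. level v = n}"
  shows "generated_ts G (S_ge W (Suc n) \<union> Z) \<subseteq> generated_ts G (S_ge W (Suc m))"
  using assms by (intro generated_ts_mono) (auto simp: mem_S_ge_iff)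

lemma generated_by_higher_and_one_lower_level:
  assumes "m < n" and "generated_by_higher_and_one G W n a"
  shows "a \<in> generated_ts G (S_ge W (Suc m))"
proof -
  obtain Z w where "Z \<subseteq> {v \<in> W. level v = n}" "a \<in> generated_ts G (S_ge W (Suc n) \<union> Z)"
    using assms(2) by (rule generated_by_higher_and_oneE)
  with generated_ts_lower_level[OF assms(1)] show ?thesis by blast
qed

end

definition generated_above ::
  "('a, 'b) monoid_scheme \<Rightarrow> ('a set \<times> 'a set) set \<Rightarrow> 'a set \<times> 'a set \<Rightarrow> ('a set \<times> 'a set) set"
  where "generated_above G W a = generated_ts G (S_ge W (Suc (level a)) \<union> {a})"

locale finite_transfer_system = group G for G :: "('a, 'b) monoid_scheme" (structure) +
  fixes T :: "('a set \<times> 'a set) set"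
  assumes finite_carrier: "finite (carrier G)"
    and transfer_system: "transfer_system G T"
begin

lemma transfer_system_generated_higher_Un:
  "W \<subseteq> T \<Longrightarrow> Z \<subseteq> W \<Longrightarrow> transfer_system G (generated_ts G (S_ge W n \<union> Z))"
  using S_ge_subset by (intro transfer_system_generated_ts[OF transfer_system]) blast

lemma subgroups_if_mem:
  assumes "(H, K) \<in> T"
  shows "subgroup H G" and "subgroup K G" and "H \<subseteq> K"
  using transfer_system_is_arrow[OF transfer_system assms] unfolding is_arrow_def by simp_all

context
  fixes W assumes W: "W \<subseteq> T"
begin

lemma generated_by_higher_and_one_transfer_systemE:
  assumes "generated_by_higher_and_one G W n a"
  obtains Z w where "Z \<subseteq> {v \<in> W. level v = n}" and "Z \<subseteq> {w}"
    and "a \<in> generated_ts G (S_ge W (Suc n) \<union> Z)"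
    and "transfer_system G (generated_ts G (S_ge W (Suc n) \<union> Z))"
proof -
  obtain Z w where Z: "Z \<subseteq> {v \<in> W. level v = n}" "Z \<subseteq> {w}"
    and "a \<in> generated_ts G (S_ge W (Suc n) \<union> Z)"
    using assms by (rule generated_by_higher_and_oneE)
  moreover have "transfer_system G (generated_ts G (S_ge W (Suc n) \<union> Z))"
    using Z(1) by (intro transfer_system_generated_higher_Un[OF W]) auto
  ultimately show ?thesis by (rule that)
qed

lemma generated_by_higher_and_one_trans:
  assumes HK: "(H, K) \<in> T"
    and HK_gen: "generated_by_higher_and_one G W (P_len H) (H, K)"
    and KL_gen: "generated_by_higher_and_one G W (P_len K) (K, L)"
  shows "generated_by_higher_and_one G W (P_len H) (H, L)"
proof -
  have "P_len H \<le> P_len K"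
    using subgroups_if_mem[OF HK] by (rule P_len_subgroup_mono[OF finite_carrier])
  then consider "P_len H = P_len K" | "P_len H < P_len K"
    by linarith
  then show ?thesis
  proof cases
    case 1
    then have "H = K"
      using subgroups_if_mem[OF HK] by (intro subgroup_eq_if_P_len_eq[OF finite_carrier])
    with KL_gen show ?thesis by simp
  next
    case 2
    obtain Z w where Z: "Z \<subseteq> {v \<in> W. level v = P_len H}" "Z \<subseteq> {w}"
      and HK_mem: "(H, K) \<in> generated_ts G (S_ge W (Suc (P_len H)) \<union> Z)"
      and ts: "transfer_system G (generated_ts G (S_ge W (Suc (P_len H)) \<union> Z))"
      using HK_gen by (rule generated_by_higher_and_one_transfer_systemE)
    have "(K, L) \<in> generated_ts G (S_ge W (Suc (P_len H)))"
      using 2 KL_gen by (rule generated_by_higher_and_one_lower_level)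
    then have "(K, L) \<in> generated_ts G (S_ge W (Suc (P_len H)) \<union> Z)"
      using generated_ts_mono[of "S_ge W (Suc (P_len H))"] by blast
    with HK_mem have "(H, L) \<in> generated_ts G (S_ge W (Suc (P_len H)) \<union> Z)"
      by (rule transfer_system_trans[OF ts])
    with Z show ?thesis by (rule generated_by_higher_and_oneI)
  qed
qed

lemma generated_by_higher_and_one_conj:
  assumes HK: "(H, K) \<in> T" and g: "g \<in> carrier G"
    and HK_gen: "generated_by_higher_and_one G W (P_len H) (H, K)"
  shows "generated_by_higher_and_one G W (P_len (conj_sub G g H)) (conj_sub G g H, conj_sub G g K)"
proof -
  obtain Z w where Z: "Z \<subseteq> {v \<in> W. level v = P_len H}" "Z \<subseteq> {w}"
    and HK_mem: "(H, K) \<in> generated_ts G (S_ge W (Suc (P_len H)) \<union> Z)"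
    and ts: "transfer_system G (generated_ts G (S_ge W (Suc (P_len H)) \<union> Z))"
    using HK_gen by (rule generated_by_higher_and_one_transfer_systemE)
  have "(conj_sub G g H, conj_sub G g K) \<in> generated_ts G (S_ge W (Suc (P_len H)) \<union> Z)"
    using HK_mem g by (rule transfer_system_conj[OF ts])
  moreover have "P_len (conj_sub G g H) = P_len H"
    using subgroup.subset[OF subgroups_if_mem(1)[OF HK]] g by (rule P_len_conj_sub)
  ultimately show ?thesis
    using Z by (simp add: generated_by_higher_and_oneI)
qed

lemma generated_by_higher_and_one_restrict:
  assumes HK: "(H, K) \<in> T" and L: "subgroup L G" "L \<subseteq> K"
    and HK_gen: "generated_by_higher_and_one G W (P_len H) (H, K)"
  shows "generated_by_higher_and_one G W (P_len (H \<inter> L)) (H \<inter> L, L)"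
proof -
  obtain Z w where Z: "Z \<subseteq> {v \<in> W. level v = P_len H}" "Z \<subseteq> {w}"
    and HK_mem: "(H, K) \<in> generated_ts G (S_ge W (Suc (P_len H)) \<union> Z)"
    and ts: "transfer_system G (generated_ts G (S_ge W (Suc (P_len H)) \<union> Z))"
    using HK_gen by (rule generated_by_higher_and_one_transfer_systemE)
  have restr_mem: "(H \<inter> L, L) \<in> generated_ts G (S_ge W (Suc (P_len H)) \<union> Z)"
    using HK_mem L by (rule transfer_system_restrict[OF ts])
  have "P_len (H \<inter> L) \<le> P_len H"
    using subgroups_if_mem(1)[OF HK] L(1)
    by (intro P_len_subgroup_mono[OF finite_carrier] subgroups_Inter_pair) auto
  then consider "P_len (H \<inter> L) = P_len H" | "P_len (H \<inter> L) < P_len H"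
    by linarith
  then show ?thesis
  proof cases
    case 1
    with Z restr_mem show ?thesis by (simp add: generated_by_higher_and_oneI)
  next
    case 2
    have "(H \<inter> L, L) \<in> generated_ts G (S_ge W (Suc (P_len (H \<inter> L))))"
      using generated_ts_lower_level[OF 2 Z(1)] restr_mem by blast
    then show ?thesis by (rule generated_by_higher_and_one_if_higher)
  qed
qed

lemma transfer_system_generated_by_higher_and_one:
  "transfer_system G {a \<in> T. generated_by_higher_and_one G W (level a) a}" (is "transfer_system G ?Q")
proof (rule transfer_systemI)
  fix a assume "a \<in> ?Q"
  then show "is_arrow G a" by (simp add: transfer_system_is_arrow[OF transfer_system])
next
  fix H assume H: "subgroup H G"
  have "transfer_system G (generated_ts G (S_ge W (Suc (P_len H))))"
    using transfer_system_generated_higher_Un[OF W, of "{}"] by simp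
  then have "generated_by_higher_and_one G W (P_len H) (H, H)"
    using H by (intro generated_by_higher_and_one_if_higher transfer_system_refl)
  with H show "(H, H) \<in> ?Q"
    by (simp add: transfer_system_refl[OF transfer_system])
next
  fix H K L assume "(H, K) \<in> ?Q" and "(K, L) \<in> ?Q"
  then have HK: "(H, K) \<in> T" and KL: "(K, L) \<in> T"
    and "generated_by_higher_and_one G W (P_len H) (H, K)"
    and "generated_by_higher_and_one G W (P_len K) (K, L)"
    by simp_all
  then show "(H, L) \<in> ?Q"
    using transfer_system_trans[OF transfer_system HK KL] generated_by_higher_and_one_trans[OF HK]
    by simp
next
  fix H K g assume "(H, K) \<in> ?Q" and g: "g \<in> carrier G"
  then have HK: "(H, K) \<in> T" and "generated_by_higher_and_one G W (P_len H) (H, K)"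
    by simp_all
  then show "(conj_sub G g H, conj_sub G g K) \<in> ?Q"
    using transfer_system_conj[OF transfer_system HK g] generated_by_higher_and_one_conj[OF HK g]
    by simp
next
  fix H K L assume "(H, K) \<in> ?Q" and L: "subgroup L G" "L \<subseteq> K"
  then have HK: "(H, K) \<in> T" and "generated_by_higher_and_one G W (P_len H) (H, K)"
    by simp_all
  then show "(H \<inter> L, L) \<in> ?Q"
    using transfer_system_restrict[OF transfer_system HK L] generated_by_higher_and_one_restrict[OF HK L]
    by simp
qed

lemma generated_by_higher_and_one_if_generated:
  assumes "a \<in> generated_ts G W"
  shows "generated_by_higher_and_one G W (level a) a"
proof -
  let ?Q = "{a \<in> T. generated_by_higher_and_one G W (level a) a}"
  have "W \<subseteq> ?Q"
  proof
    fix w assume "w \<in> W"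
    have "w \<in> generated_ts G (S_ge W (Suc (level w)) \<union> {w})"
      using subset_generated_ts by blast
    with \<open>w \<in> W\<close> have "generated_by_higher_and_one G W (level w) w"
      by (intro generated_by_higher_and_oneI[of "{w}"]) auto
    with \<open>w \<in> W\<close> W show "w \<in> ?Q"
      by blast
  qed
  then have "generated_ts G W \<subseteq> ?Q"
    by (rule generated_ts_least[OF transfer_system_generated_by_higher_and_one])
  with assms show ?thesis by blast
qed

end

lemma generated_S_ge_subset:
  assumes "W \<subseteq> T" and "V \<subseteq> generated_ts G W"
  shows "generated_ts G (S_ge V n) \<subseteq> generated_ts G (S_ge W n)"
proof (rule generated_ts_subsetI, rule subsetI)
  fix v assume "v \<in> S_ge V n"
  with assms(2) have "n \<le> level v" and "v \<in> generated_ts G W"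
    by (auto simp: mem_S_ge_iff)
  obtain Z w where Z: "Z \<subseteq> {x \<in> W. level x = level v}"
    and v_mem: "v \<in> generated_ts G (S_ge W (Suc (level v)) \<union> Z)"
    using generated_by_higher_and_one_if_generated[OF assms(1) \<open>v \<in> generated_ts G W\<close>]
    by (rule generated_by_higher_and_oneE)
  have "S_ge W (Suc (level v)) \<union> Z \<subseteq> S_ge W n"
    using Z \<open>n \<le> level v\<close> by (auto simp: mem_S_ge_iff)
  with v_mem show "v \<in> generated_ts G (S_ge W n)"
    using generated_ts_mono by blast
qed

lemma generated_S_ge_cong:
  assumes "V \<subseteq> T" and "W \<subseteq> T" and "generated_ts G V = generated_ts G W"
  shows "generated_ts G (S_ge V n) = generated_ts G (S_ge W n)"
  using assms subset_generated_ts[of V G] subset_generated_ts[of W G]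
  by (intro subset_antisym generated_S_ge_subset) auto

lemma generated_above_cong:
  assumes "V \<subseteq> T" and "W \<subseteq> T" and "generated_ts G V = generated_ts G W"
  shows "generated_above G V a = generated_above G W a"
  unfolding generated_above_def using generated_S_ge_cong[OF assms] by (rule generated_ts_Un_cong)

end

locale minimal_generating = finite_transfer_system +
  fixes S :: "('a set \<times> 'a set) set"
  assumes minimal_generating_set: "minimal_generating_set G T S"
begin

lemma generators_subset: "S \<subseteq> T"
  and generated_generators: "generated_ts G S = T"
  and generated_remove_psubset: "s \<in> S \<Longrightarrow> generated_ts G (S - {s}) \<subset> T"
  using minimal_generating_set unfolding minimal_generating_set_def by auto

lemma not_mem_generated_remove:
  assumes "s \<in> S"
  shows "s \<notin> generated_ts G (S - {s})"
proof
  assume "s \<in> generated_ts G (S - {s})"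
  then have "S \<subseteq> generated_ts G (S - {s})"
    using subset_generated_ts[of "S - {s}" G] by blast
  then have "T \<subseteq> generated_ts G (S - {s})"
    unfolding generated_generators[symmetric] by (rule generated_ts_subsetI)
  with generated_remove_psubset[OF assms] show False by blast
qed

lemma mem_of_mem_generated_higher_Un:
  assumes "s \<in> S" and "Z \<subseteq> S"
    and "s \<in> generated_ts G (S_ge S (Suc (level s)) \<union> Z)"
  shows "s \<in> Z"
proof (rule ccontr)
  assume "s \<notin> Z"
  with assms(2) have "S_ge S (Suc (level s)) \<union> Z \<subseteq> S - {s}"
    by (auto simp: mem_S_ge_iff)
  with assms(3) have "s \<in> generated_ts G (S - {s})"
    using generated_ts_mono by blast
  with not_mem_generated_remove[OF assms(1)] show False ..
qed

lemma inj_on_level_generated_above: "inj_on (\<lambda>s. (level s, generated_above G S s)) S"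
proof (rule inj_onI)
  fix s t
  assume "s \<in> S" and "t \<in> S"
    and eq: "(level s, generated_above G S s) = (level t, generated_above G S t)"
  from eq have level_eq: "level s = level t"
    and above_eq: "generated_above G S s = generated_above G S t"
    by simp_all
  have "t \<in> generated_above G S t"
    unfolding generated_above_def using subset_generated_ts by blast
  then have "t \<in> generated_above G S s"
    unfolding above_eq .
  then have t_mem: "t \<in> generated_ts G (S_ge S (Suc (level t)) \<union> {s})"
    unfolding generated_above_def level_eq .
  have "t \<in> {s}"
    by (rule mem_of_mem_generated_higher_Un[OF \<open>t \<in> S\<close> _ t_mem]) (use \<open>s \<in> S\<close> in simp)
  then show "s = t" by simp
qed

lemma ex_mem_generated_higher_single:
  assumes R: "R \<subseteq> T" "generated_ts G R = T" and s: "s \<in> S"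
  shows "\<exists>r\<in>R. level r = level s \<and> s \<in> generated_ts G (S_ge S (Suc (level s)) \<union> {r})"
proof -
  have "s \<in> generated_ts G R"
    using s generators_subset R(2) by blast
  then have "generated_by_higher_and_one G R (level s) s"
    by (rule generated_by_higher_and_one_if_generated[OF R(1)])
  then obtain Z r where Z: "Z \<subseteq> {v \<in> R. level v = level s}" "Z \<subseteq> {r}"
    and "s \<in> generated_ts G (S_ge R (Suc (level s)) \<union> Z)"
    by (rule generated_by_higher_and_oneE)
  moreover have "generated_ts G R = generated_ts G S"
    using R(2) generated_generators by simp
  then have "generated_ts G (S_ge R (Suc (level s)) \<union> Z) = generated_ts G (S_ge S (Suc (level s)) \<union> Z)"
    by (intro generated_ts_Un_cong generated_S_ge_cong[OF R(1) generators_subset])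
  ultimately have s_mem: "s \<in> generated_ts G (S_ge S (Suc (level s)) \<union> Z)"
    by simp
  have "Z \<noteq> {}"
  proof
    assume "Z = {}"
    with s_mem have "s \<in> {}"
      by (intro mem_of_mem_generated_higher_Un[OF s, of "{}"]) simp_all
    then show False by simp
  qed
  with Z(2) have "Z = {r}"
    by blast
  with Z(1) s_mem show ?thesis
    by auto
qed

lemma generated_above_exchange:
  assumes s: "s \<in> S" and x: "x \<in> T" "level x = level s"
    and "s \<in> generated_above G S x"
  shows "generated_above G S x = generated_above G S s"
proof -
  let ?H = "S_ge S (Suc (level s))"
  have s_mem: "s \<in> generated_ts G (?H \<union> {x})"
    using \<open>s \<in> generated_above G S x\<close> x(2) unfolding generated_above_def by simp
  have "x \<in> generated_ts G S"
    using x(1) generated_generators by simp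
  then have "generated_by_higher_and_one G S (level x) x"
    by (rule generated_by_higher_and_one_if_generated[OF generators_subset])
  then have "generated_by_higher_and_one G S (level s) x"
    unfolding x(2) .
  then obtain Z w where Z: "Z \<subseteq> {v \<in> S. level v = level s}" "Z \<subseteq> {w}"
    and x_mem: "x \<in> generated_ts G (?H \<union> Z)"
    by (rule generated_by_higher_and_oneE)
  have "?H \<union> {x} \<subseteq> generated_ts G (?H \<union> Z)"
    using x_mem subset_generated_ts[of "?H \<union> Z" G] by blast
  then have "generated_ts G (?H \<union> {x}) \<subseteq> generated_ts G (?H \<union> Z)"
    by (rule generated_ts_subsetI)
  with s_mem have "s \<in> generated_ts G (?H \<union> Z)"
    by blast
  then have "s \<in> Z"
    by (rule mem_of_mem_generated_higher_Un[OF s, rotated]) (use Z(1) in auto)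
  with Z(2) have "Z = {s}"
    by auto
  with x_mem have x_mem': "x \<in> generated_ts G (?H \<union> {s})"
    by simp
  have "?H \<union> {x} \<subseteq> generated_ts G (?H \<union> {s})"
    using x_mem' subset_generated_ts[of "?H \<union> {s}" G] by blast
  moreover have "?H \<union> {s} \<subseteq> generated_ts G (?H \<union> {x})"
    using s_mem subset_generated_ts[of "?H \<union> {x}" G] by blast
  ultimately show ?thesis
    unfolding generated_above_def x(2) by (rule generated_ts_eqI)
qed

lemma ex_generated_above_eq:
  assumes "R \<subseteq> T" and "generated_ts G R = T" and "s \<in> S"
  shows "\<exists>r\<in>R. level r = level s \<and> generated_above G S r = generated_above G S s"
proof -
  obtain r where "r \<in> R" and "level r = level s"
    and "s \<in> generated_ts G (S_ge S (Suc (level s)) \<union> {r})"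
    using ex_mem_generated_higher_single[OF assms] by blast
  moreover from this have "generated_above G S r = generated_above G S s"
    using assms by (intro generated_above_exchange) (auto simp: generated_above_def)
  ultimately show ?thesis by blast
qed

end

lemma bij_betw_inv_into_comp:
  assumes "inj_on f A" and "inj_on f B" and "f ` A = f ` B"
  shows "bij_betw (inv_into B f \<circ> f) A B"
    and "a \<in> A \<Longrightarrow> f ((inv_into B f \<circ> f) a) = f a"
proof -
  show "bij_betw (inv_into B f \<circ> f) A B"
    using inj_on_imp_bij_betw[OF assms(1)] bij_betw_inv_into[OF inj_on_imp_bij_betw[OF assms(2)]]
    unfolding assms(3) by (rule bij_betw_trans)
  show "f ((inv_into B f \<circ> f) a) = f a" if "a \<in> A"
    unfolding comp_apply by (rule f_inv_into_f) (use that assms(3) in blast)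
qed

lemma (in finite_transfer_system) ex_level_preserving_bij:
  assumes S: "minimal_generating_set G T S" and R: "minimal_generating_set G T R"
  shows "\<exists>f. bij_betw f S R \<and> (\<forall>s\<in>S. level (f s) = level s)"
proof -
  interpret S: minimal_generating G T S
    using S by unfold_locales
  interpret R: minimal_generating G T R
    using R by unfold_locales
  define \<kappa> where "\<kappa> a = (level a, generated_above G S a)" for a
  have \<kappa>_R: "\<kappa> a = (level a, generated_above G R a)" for a
    unfolding \<kappa>_def
    using generated_above_cong[OF S.generators_subset R.generators_subset]
      S.generated_generators R.generated_generators
    by simp
  have inj_S: "inj_on \<kappa> S"
    using S.inj_on_level_generated_above unfolding \<kappa>_def .
  have inj_R: "inj_on \<kappa> R"
    using R.inj_on_level_generated_above unfolding \<kappa>_R .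
  have "\<kappa> s \<in> \<kappa> ` R" if s: "s \<in> S" for s
  proof -
    obtain r where "r \<in> R" "level r = level s" "generated_above G S r = generated_above G S s"
      using S.ex_generated_above_eq[OF R.generators_subset R.generated_generators s] by blast
    then have "r \<in> R" and "\<kappa> s = \<kappa> r"
      unfolding \<kappa>_def by simp_all
    then show ?thesis by (rule rev_image_eqI)
  qed
  moreover have "\<kappa> r \<in> \<kappa> ` S" if r: "r \<in> R" for r
  proof -
    obtain s where "s \<in> S" "level s = level r" "generated_above G R s = generated_above G R r"
      using R.ex_generated_above_eq[OF S.generators_subset S.generated_generators r] by blast
    then have "s \<in> S" and "\<kappa> r = \<kappa> s"
      unfolding \<kappa>_R by simp_all
    then show ?thesis by (rule rev_image_eqI)
  qed
  ultimately have "\<kappa> ` S = \<kappa> ` R"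
    by (intro subset_antisym image_subsetI)
  with inj_S inj_R show ?thesis
    using bij_betw_inv_into_comp[of \<kappa> S R] unfolding \<kappa>_def by auto
qed

theorem proposition2p13:
  fixes G :: "('a, 'b) monoid_scheme"
    and T S R :: "('a set \<times> 'a set) set"
  assumes "group G" and "finite (carrier G)"
    and "transfer_system G T"
    and "minimal_generating_set G T S"
    and "minimal_generating_set G T R"
  shows "\<exists>f. bij_betw f S R \<and>
           (\<forall>n::nat. \<forall>a \<in> S_ge S n - S_ge S (n + 1). f a \<in> S_ge R n - S_ge R (n + 1))"
proof -
  interpret finite_transfer_system G T
    using assms(1-3) by (simp add: finite_transfer_system_def finite_transfer_system_axioms_def)
  obtain f where f: "bij_betw f S R" and level_f: "\<forall>s\<in>S. level (f s) = level s"
    using ex_level_preserving_bij[OF assms(4,5)] by blast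
  show ?thesis
  proof (intro exI conjI allI ballI)
    fix n a assume "a \<in> S_ge S n - S_ge S (n + 1)"
    then have "a \<in> S" and "level a = n"
      unfolding S_ge_diff_S_ge_Suc by simp_all
    then show "f a \<in> S_ge R n - S_ge R (n + 1)"
      unfolding S_ge_diff_S_ge_Suc using bij_betw_apply[OF f] level_f by simp
  qed (rule f)
qed

end
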